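(* Let $\hat y=\hat y(t,p,\omega,y)$ ($t\in\mathbb R$, $p,y\in\mathbb R^n$, $\omega\in\mathbb R^p$) be the solution of the system $$\frac{d\hat y^a}{dt}=\left(\sqrt{K(\hat y)}\cot\sqrt{K(\hat y)}\right)^a{}_bp^b-\omega^iD^a{}_{ib}\hat y^b,\qquad \hat y^a\big|_{t=0}=y^a.$$ Then, with $D(\omega)=\omega^iD_i$, $$\hat y^a=\left(\exp[-tD(\omega)]\right)^a{}_by^b+\left(\frac{1-\exp[-tD(\omega)]}{D(\omega)}\right)^a{}_bp^b+O(y^2,p^2,py),$$ and $$\det\left(\frac{\partial\hat y^a}{\partial p^b}\right)\Bigg|_{p=y=0,\,t=1}=\det{}_{TM}\left(\frac{\sinh[D(\omega)/2]}{D(\omega)/2}\right).$$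
   Context: $(M,g)$ is an $n$-dimensional complete simply connected Riemannian manifold with parallel Riemann tensor (a Riemannian symmetric space). Fix $x'\in M$, an orthonormal frame at $x'$, and Riemann normal coordinates $y^a$ centred at $x'$; frame indices $a,b,\dots\in\{1,\dots,n\}$ are raised/lowered with $\delta_{ab}$, and $R_{abcd}$ denote the (constant) frame components of the curvature at $x'$. The curvature is written as $R_{abcd}=\beta_{ik}E^i{}_{ab}E^k{}_{cd}$ with $E^i{}_{ab}$ ($i=1,\dots,p$) antisymmetric $n\times n$ matrices and $(\beta_{ik})$ a real symmetric nondegenerate $p\times p$ matrix; $D_i=(D^a{}_{ib})$ with $D^a{}_{ib}=-\beta_{ik}E^k{}_{cb}\delta^{ca}$ (these are traceless). For $y\in\mathbb R^n$, $K(y)$ is the $n\times n$ matrix $K^a{}_b=R^a{}_{cbd}y^cy^d$, and $\sqrt K\cot\sqrt K$ is defined by its power series. $\det_{TM}$ is the determinant of $n\times n$ matrices, and matrix functions such as $(1-e^{-tD})/D$ and $\sinh(D/2)/(D/2)$ are defined by power series. *)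

theory Defs
  imports "HOL-Analysis.Analysis" "HOL-Library.Landau_Symbols"
begin

primrec mpow :: "real^'n^'n \<Rightarrow> nat \<Rightarrow> real^'n^'n" where
  "mpow A 0 = mat 1"
| "mpow A (Suc k) = A ** mpow A k"

definition mat_series :: "(nat \<Rightarrow> real) \<Rightarrow> real^'n^'n \<Rightarrow> real^'n^'n" where
  "mat_series c A = (\<Sum>k. c k *\<^sub>R mpow A k)"

text \<open>The even function w cot w (value 1 at 0); the function sqrt z cot sqrt z
  has the power series in z whose k-th coefficient is the (2k)-th Taylor
  coefficient of w cot w at 0.\<close>
definition wcot :: "real \<Rightarrow> real" where
  "wcot w = (if w = 0 then 1 else w * cos w / sin w)"

definition sqrtcot_coeff :: "nat \<Rightarrow> real" where
  "sqrtcot_coeff k = (deriv ^^ (2 * k)) wcot 0 / fact (2 * k)"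

definition expneg_coeff :: "real \<Rightarrow> nat \<Rightarrow> real" where
  "expneg_coeff t k = (- t) ^ k / fact k"

text \<open>Coefficients of (1 - exp(-t x)) / x = sum_j (-1)^j t^(j+1) x^j / (j+1)!.\<close>
definition oneminusexp_div_coeff :: "real \<Rightarrow> nat \<Rightarrow> real" where
  "oneminusexp_div_coeff t j = (-1) ^ j * t ^ (j + 1) / fact (j + 1)"

text \<open>Coefficients of sinh(x/2)/(x/2) = sum_j (x/2)^(2j) / (2j+1)!.\<close>
definition sinhc_half_coeff :: "nat \<Rightarrow> real" where
  "sinhc_half_coeff k = (if even k then (1/2) ^ k / fact (k + 1) else 0)"

definition curv :: "('m::finite \<Rightarrow> real^'n^'n) \<Rightarrow> real^'m^'m \<Rightarrow> 'n \<Rightarrow> 'n \<Rightarrow> 'n \<Rightarrow> 'n \<Rightarrow> real" where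
  "curv E \<beta> a b c d = (\<Sum>i\<in>UNIV. \<Sum>k\<in>UNIV. \<beta> $ i $ k * E i $ a $ b * E k $ c $ d)"

text \<open>K(y)^a_b = R^a_cbd y^c y^d (indices raised with delta).\<close>
definition Kmat :: "('m::finite \<Rightarrow> real^'n^'n) \<Rightarrow> real^'m^'m \<Rightarrow> real^'n \<Rightarrow> real^'n^'n" where
  "Kmat E \<beta> y = (\<chi> a b. \<Sum>c\<in>UNIV. \<Sum>d\<in>UNIV. curv E \<beta> a c b d * y $ c * y $ d)"

text \<open>D_i with D^a_ib = - beta_ik E^k_cb delta^ca = - beta_ik E^k_ab.\<close>
definition Dgen :: "('m::finite \<Rightarrow> real^'n^'n) \<Rightarrow> real^'m^'m \<Rightarrow> 'm \<Rightarrow> real^'n^'n" where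
  "Dgen E \<beta> i = (\<chi> a b. - (\<Sum>k\<in>UNIV. \<beta> $ i $ k * E k $ a $ b))"

definition Dom :: "('m::finite \<Rightarrow> real^'n^'n) \<Rightarrow> real^'m^'m \<Rightarrow> real^'m \<Rightarrow> real^'n^'n" where
  "Dom E \<beta> \<omega> = (\<Sum>i\<in>UNIV. \<omega> $ i *\<^sub>R Dgen E \<beta> i)"

definition yhat_rhs :: "('m::finite \<Rightarrow> real^'n^'n) \<Rightarrow> real^'m^'m \<Rightarrow> real^'m \<Rightarrow> real^'n \<Rightarrow> real^'n \<Rightarrow> real^'n" where
  "yhat_rhs E \<beta> \<omega> p z = mat_series sqrtcot_coeff (Kmat E \<beta> z) *v p - Dom E \<beta> \<omega> *v z"

end

theory Submission
  imports Defs "HOL-Complex_Analysis.Cauchy_Integral_Formula"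
begin

text \<open>The flow solves \<open>y' = S y p - D y\<close> with \<open>S = sqrt K cot (sqrt K)\<close>. As \<open>K y\<close> is quadratic
  in \<open>y\<close> and \<open>w cot w = 1 + O(w\<^sup>2)\<close> is holomorphic for \<open>|w| < pi\<close>, we have
  \<open>S y = 1 + O(|y|\<^sup>2)\<close>. The deviation of the flow from \<open>exp (-t D) y + (1 - exp (-t D)) / D p\<close>,
  the solution for \<open>S = 1\<close>, therefore solves a linear equation forced by
  \<open>(S y - 1) p = O((|y| + |p|)\<^sup>2 |p|)\<close>, and Gronwall's inequality bounds it quadratically.
  For the Jacobian, \<open>(1 - exp (-D)) / D = exp (-D/2) sinh (D/2) / (D/2)\<close>, and \<open>exp (-D/2)\<close>
  has determinant \<open>1\<close>: it is orthogonal because \<open>D\<close> is antisymmetric, and it is a square.\<close>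

section \<open>Matrices with the Frobenius norm\<close>

lemma norm_vec_power2: "norm (x::'a::real_normed_vector^'n) ^ 2 = (\<Sum>i\<in>UNIV. norm (x $ i) ^ 2)"
  by (simp add: norm_vec_def L2_set_def sum_nonneg)

lemma norm_matrix_vector_mult_le: "norm ((A::real^'n^'m) *v x) \<le> norm A * norm x"
proof -
  have "norm (A *v x) ^ 2 = (\<Sum>i\<in>UNIV. (A $ i \<bullet> x) ^ 2)"
    by (simp add: norm_vec_power2 matrix_vector_mul_component)
  also have "\<dots> \<le> (\<Sum>i\<in>UNIV. (norm (A $ i) * norm x) ^ 2)"
    by (intro sum_mono) (metis Cauchy_Schwarz_ineq2 abs_ge_zero power_mono real_sqrt_abs real_sqrt_pow2_iff sqrt_le_D)
  also have "\<dots> = (norm A * norm x) ^ 2"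
    by (simp add: norm_vec_power2 power_mult_distrib sum_distrib_right)
  finally show ?thesis
    using power2_le_imp_le by fastforce
qed

lemma norm_transpose: "norm (transpose (A::real^'n^'m)) = norm A"
proof -
  have "norm (transpose A) ^ 2 = norm A ^ 2"
    by (simp add: norm_vec_power2 transpose_def) (subst sum.swap, simp)
  then show ?thesis by (simp add: power2_eq_iff_nonneg)
qed

lemma norm_matrix_mult_le: "norm ((A::real^'n^'m) ** (B::real^'k^'n)) \<le> norm A * norm B"
proof -
  have row: "(A ** B) $ i = transpose B *v (A $ i)" for i
    by (simp add: matrix_matrix_mult_def matrix_vector_mult_def transpose_def vec_eq_iff mult.commute)
  have "norm (A ** B) ^ 2 = (\<Sum>i\<in>UNIV. norm (transpose B *v (A $ i)) ^ 2)"
    by (simp add: norm_vec_power2[of "A ** B"] row)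
  also have "\<dots> \<le> (\<Sum>i\<in>UNIV. (norm B * norm (A $ i)) ^ 2)"
    using norm_matrix_vector_mult_le[of "transpose B"] norm_transpose[of B]
    by (intro sum_mono) (metis norm_ge_zero power_mono)
  also have "\<dots> = (norm A * norm B) ^ 2"
    by (simp add: norm_vec_power2[of A] power_mult_distrib sum_distrib_left mult.commute)
  finally show ?thesis
    using power2_le_imp_le by fastforce
qed

lemma norm_matrix_le_sum_abs: "norm (M::real^'n^'m) \<le> (\<Sum>a\<in>UNIV. \<Sum>b\<in>UNIV. \<bar>M $ a $ b\<bar>)"
proof -
  have "norm M \<le> (\<Sum>a\<in>UNIV. norm (M $ a))"
    unfolding norm_vec_def by (rule L2_set_le_sum) simp
  also have "\<dots> \<le> (\<Sum>a\<in>UNIV. \<Sum>b\<in>UNIV. \<bar>M $ a $ b\<bar>)"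
    by (intro sum_mono norm_le_l1_cart)
  finally show ?thesis .
qed

interpretation matrix_mult: bounded_bilinear "(**) :: real^'n^'m \<Rightarrow> real^'k^'n \<Rightarrow> real^'k^'m"
proof
  show "\<exists>K. \<forall>A B. norm ((A::real^'n^'m) ** (B::real^'k^'n)) \<le> norm A * norm B * K"
    using norm_matrix_mult_le by (metis mult.right_neutral)
qed (simp_all add: matrix_matrix_mult_def vec_eq_iff sum.distrib algebra_simps sum_distrib_left)

interpretation matrix_vector_mult: bounded_bilinear "(*v) :: real^'n^'m \<Rightarrow> real^'n \<Rightarrow> real^'m"
proof
  show "\<exists>K. \<forall>A x. norm ((A::real^'n^'m) *v (x::real^'n)) \<le> norm A * norm x * K"
    using norm_matrix_vector_mult_le by (metis mult.right_neutral)
qed (simp_all add: algebra_simps scaleR_matrix_vector_assoc)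

lemma bounded_linear_transpose: "bounded_linear (transpose :: real^'n^'m \<Rightarrow> real^'m^'n)"
  by (rule bounded_linear_intro[where K=1])
     (simp_all add: norm_transpose, simp_all add: transpose_def vec_eq_iff)

lemma mpow_commute: "mpow D k ** D = D ** mpow (D::real^'n^'n) k"
  by (induction k) (simp_all add: matrix_mul_assoc[symmetric])

lemma mpow_uminus: "mpow (- D) k = (-1) ^ k *\<^sub>R mpow (D::real^'n^'n) k"
  by (induction k) (simp_all add: matrix_mult.minus_left matrix_mult.scaleR_right)

lemma norm_mpow_le: "norm (mpow A k) \<le> norm (mat 1 :: real^'n^'n) * norm (A::real^'n^'n) ^ k"
proof (induction k)
  case (Suc k)
  have "norm (mpow A (Suc k)) \<le> norm A * norm (mpow A k)" by (simp add: norm_matrix_mult_le)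
  also have "\<dots> \<le> norm A * (norm (mat 1 :: real^'n^'n) * norm A ^ k)"
    using Suc by (simp add: mult_left_mono)
  finally show ?case by (simp add: algebra_simps)
qed simp

lemma norm_le_if_near_id:
  assumes "norm (A - mat 1) \<le> c"
  shows "norm (A::real^'n^'n) \<le> norm (mat 1 :: real^'n^'n) + c"
  using norm_triangle_ineq[of "mat 1" "A - mat 1"] assms by simp

lemma transpose_uminus: "transpose (- A) = - transpose (A::'a::ring_1^'n^'m)"
  by (simp add: transpose_def vec_eq_iff)

section \<open>Power series with vector coefficients\<close>

definition entire_coeffs :: "(nat \<Rightarrow> real) \<Rightarrow> bool" where
  "entire_coeffs a \<longleftrightarrow> (\<forall>x. summable (\<lambda>k. \<bar>a k\<bar> * x ^ k))"

lemma entire_coeffs_if_fact_bound: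
  assumes "\<And>k. \<bar>a k\<bar> \<le> 1 / fact k"
  shows "entire_coeffs a"
  unfolding entire_coeffs_def
proof
  fix x :: real
  show "summable (\<lambda>k. \<bar>a k\<bar> * x ^ k)"
  proof (rule summable_comparison_test)
    show "\<exists>N. \<forall>n\<ge>N. norm (\<bar>a n\<bar> * x ^ n) \<le> inverse (fact n) * \<bar>x\<bar> ^ n"
      using assms by (auto simp: abs_mult power_abs divide_inverse intro!: mult_right_mono)
  qed (rule summable_exp)
qed

lemma entire_coeffs_diffs: "entire_coeffs a \<Longrightarrow> entire_coeffs (diffs a)"
proof -
  assume "entire_coeffs a"
  then have "summable (\<lambda>n. diffs (\<lambda>k. \<bar>a k\<bar>) n * x ^ n)" for x
    by (intro termdiff_converges_all) (simp add: entire_coeffs_def)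
  moreover have "diffs (\<lambda>k. \<bar>a k\<bar>) = (\<lambda>n. \<bar>diffs a n\<bar>)"
    by (simp add: fun_eq_iff diffs_def abs_mult)
  ultimately show ?thesis by (simp add: entire_coeffs_def)
qed

definition geom_bounded :: "(nat \<Rightarrow> 'a::real_normed_vector) \<Rightarrow> bool" where
  "geom_bounded M \<longleftrightarrow> (\<exists>C L. \<forall>k. norm (M k) \<le> C * L ^ k)"

lemma geom_bounded_Suc: "geom_bounded M \<Longrightarrow> geom_bounded (\<lambda>k. M (Suc k))"
  unfolding geom_bounded_def by (metis mult.assoc power_Suc)

lemma geom_bounded_mpow_diff:
  "geom_bounded (\<lambda>k. mpow (D::real^'n^'n) (k - j))"
  unfolding geom_bounded_def
proof (intro exI allI)
  fix k
  have "norm D ^ (k - j) \<le> (norm D + 1) ^ k"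
    by (rule order_trans[OF power_mono power_increasing]) auto
  then show "norm (mpow D (k - j)) \<le> norm (mat 1 :: real^'n^'n) * (norm D + 1) ^ k"
    using norm_mpow_le[of D "k - j"] by (meson mult_left_mono norm_ge_zero order_trans)
qed

lemma geom_bounded_mpow: "geom_bounded (mpow (D::real^'n^'n))"
  using geom_bounded_mpow_diff[of D 0] by simp

definition power_series :: "(nat \<Rightarrow> real) \<Rightarrow> (nat \<Rightarrow> 'a::real_normed_vector) \<Rightarrow> real \<Rightarrow> 'a" where
  "power_series a M s = (\<Sum>k. (a k * s ^ k) *\<^sub>R M k)"

lemma summable_norm_power_series:
  assumes "entire_coeffs a" "geom_bounded M"
  shows "summable (\<lambda>k. norm ((a k * s ^ k) *\<^sub>R M k))"
proof -
  obtain C L where M: "\<And>k. norm (M k) \<le> C * L ^ k"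
    using assms(2) unfolding geom_bounded_def by blast
  show ?thesis
  proof (rule summable_comparison_test)
    show "\<exists>N. \<forall>n\<ge>N. norm (norm ((a n * s ^ n) *\<^sub>R M n)) \<le> C * (\<bar>a n\<bar> * (\<bar>s\<bar> * L) ^ n)"
    proof (intro exI allI impI)
      fix n
      have "norm (norm ((a n * s ^ n) *\<^sub>R M n)) = \<bar>a n\<bar> * \<bar>s\<bar> ^ n * norm (M n)"
        by (simp add: abs_mult power_abs)
      also have "\<dots> \<le> \<bar>a n\<bar> * \<bar>s\<bar> ^ n * (C * L ^ n)"
        by (intro mult_left_mono M) auto
      finally show "norm (norm ((a n * s ^ n) *\<^sub>R M n)) \<le> C * (\<bar>a n\<bar> * (\<bar>s\<bar> * L) ^ n)"
        by (simp add: power_mult_distrib mult_ac)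
    qed
    show "summable (\<lambda>n. C * (\<bar>a n\<bar> * (\<bar>s\<bar> * L) ^ n))"
      using assms(1) by (intro summable_mult) (simp add: entire_coeffs_def)
  qed
qed

lemma summable_power_series:
  fixes M :: "nat \<Rightarrow> 'a::banach"
  assumes "entire_coeffs a" "geom_bounded M"
  shows "summable (\<lambda>k. (a k * s ^ k) *\<^sub>R M k)"
  by (rule summable_norm_cancel[OF summable_norm_power_series[OF assms]])

lemma bounded_linear_power_series:
  fixes M :: "nat \<Rightarrow> 'a::banach"
  assumes "bounded_linear f" "entire_coeffs a" "geom_bounded M"
  shows "f (power_series a M s) = power_series a (\<lambda>k. f (M k)) s"
  unfolding power_series_def
  using bounded_linear.suminf[OF assms(1) summable_power_series[OF assms(2,3)]]
  by (simp add: linear_scale[OF bounded_linear.linear[OF assms(1)]])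

lemma power_series_has_vector_derivative:
  fixes M :: "nat \<Rightarrow> 'a::euclidean_space"
  assumes a: "entire_coeffs a" and M: "geom_bounded M"
  shows "(power_series a M has_vector_derivative power_series (diffs a) (\<lambda>k. M (Suc k)) s) (at s)"
  unfolding has_vector_derivative_def
proof (subst has_derivative_componentwise_within, intro ballI)
  fix b :: 'a assume b: "b \<in> Basis"
  define c where "c k = a k * (M k \<bullet> b)" for k
  have inner_b: "power_series a' M' x \<bullet> b = (\<Sum>k. a' k * (M' k \<bullet> b) * x ^ k)"
    if "entire_coeffs a'" "geom_bounded M'" for a' and M' :: "nat \<Rightarrow> 'a" and x
    using bounded_linear_power_series[OF bounded_linear_inner_left that]
    by (simp add: power_series_def mult_ac)
  have "summable (\<lambda>k. c k * y ^ k)" for y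
  proof (rule summable_comparison_test)
    show "\<exists>N. \<forall>n\<ge>N. norm (c n * y ^ n) \<le> norm ((a n * y ^ n) *\<^sub>R M n)"
    proof (intro exI allI impI)
      fix n
      have "\<bar>M n \<bullet> b\<bar> * \<bar>a n * y ^ n\<bar> \<le> norm (M n) * \<bar>a n * y ^ n\<bar>"
        using Basis_le_norm[OF b] by (rule mult_right_mono) simp
      then show "norm (c n * y ^ n) \<le> norm ((a n * y ^ n) *\<^sub>R M n)"
        by (simp add: c_def abs_mult mult_ac)
    qed
  qed (rule summable_norm_power_series[OF a M])
  then have "((\<lambda>x. \<Sum>k. c k * x ^ k) has_real_derivative (\<Sum>k. diffs c k * s ^ k)) (at s)"
    by (rule termdiffs_strong_converges_everywhere)
  moreover have "diffs c = (\<lambda>k. diffs a k * (M (Suc k) \<bullet> b))"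
    by (simp add: fun_eq_iff diffs_def c_def)
  ultimately show "((\<lambda>x. power_series a M x \<bullet> b) has_derivative
      (\<lambda>h. h *\<^sub>R power_series (diffs a) (\<lambda>k. M (Suc k)) s \<bullet> b)) (at s)"
    using inner_b[OF a M] inner_b[OF entire_coeffs_diffs[OF a] geom_bounded_Suc[OF M]]
    by (simp add: c_def has_field_derivative_def mult_commute_abs)
qed

lemma power_series_eq_head:
  assumes "\<And>k. 0 < k \<Longrightarrow> a k * s ^ k = 0"
  shows "power_series a M s = a 0 *\<^sub>R M 0"
proof -
  have "power_series a M s = (\<Sum>k\<in>{0}. (a k * s ^ k) *\<^sub>R M k)"
    unfolding power_series_def by (rule suminf_finite) (use assms in auto)
  then show ?thesis by simp
qed

lemma power_series_lincomb:
  fixes M :: "nat \<Rightarrow> 'a::banach"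
  assumes a: "entire_coeffs a" and b: "entire_coeffs b" and M: "geom_bounded M"
  shows "x *\<^sub>R power_series a M s + y *\<^sub>R power_series b M s
    = power_series (\<lambda>k. x * a k + y * b k) M s"
proof -
  have "(\<lambda>k. x *\<^sub>R ((a k * s ^ k) *\<^sub>R M k) + y *\<^sub>R ((b k * s ^ k) *\<^sub>R M k))
      sums (x *\<^sub>R power_series a M s + y *\<^sub>R power_series b M s)"
    unfolding power_series_def
    by (intro sums_add sums_scaleR_right summable_sums summable_power_series a b M)
  then show ?thesis
    unfolding power_series_def by (simp add: sums_iff algebra_simps scaleR_add_left)
qed

lemmas geom_bounded_mpow_pred = geom_bounded_mpow_diff[where j=1]

lemma matrix_mult_power_series:
  assumes "entire_coeffs a" "geom_bounded M"
  shows "(A::real^'n^'m) ** power_series a M s = power_series a (\<lambda>k. A ** (M k :: real^'p^'n)) s"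
  by (rule bounded_linear_power_series[OF matrix_mult.bounded_linear_right assms])

lemma power_series_matrix_mult:
  assumes "entire_coeffs a" "geom_bounded M"
  shows "power_series a M s ** (B::real^'p^'n) = power_series a (\<lambda>k. (M k :: real^'n^'m) ** B) s"
  by (rule bounded_linear_power_series[OF matrix_mult.bounded_linear_left assms])

lemma mult_mpow_pred_series:
  assumes "entire_coeffs a" "a 0 = 0"
  shows "D ** power_series a (\<lambda>k. mpow D (k - 1)) s = power_series a (mpow (D::real^'n^'n)) s"
proof -
  have "(\<lambda>k. (a k * s ^ k) *\<^sub>R (D ** mpow D (k - 1))) = (\<lambda>k. (a k * s ^ k) *\<^sub>R mpow D k)"
  proof
    show "(a k * s ^ k) *\<^sub>R (D ** mpow D (k - 1)) = (a k * s ^ k) *\<^sub>R mpow D k" for k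
      using assms(2) by (cases k) auto
  qed
  then have "power_series a (\<lambda>k. D ** mpow D (k - 1)) s = power_series a (mpow D) s"
    by (simp only: power_series_def)
  then show ?thesis
    by (simp only: matrix_mult_power_series[OF assms(1) geom_bounded_mpow_pred])
qed

lemma power_series_mpow_pred:
  assumes "entire_coeffs a" "a 0 = 0"
  shows "power_series a (\<lambda>k. mpow D (k - 1)) s = (\<Sum>j. (a (Suc j) * s ^ Suc j) *\<^sub>R mpow (D::real^'n^'n) j)"
  using suminf_split_head[OF summable_power_series[OF assms(1) geom_bounded_mpow_pred, of s D]] assms(2)
  by (simp add: power_series_def)

section \<open>Energy estimates for ordinary differential equations\<close>

lemma has_real_derivative_inner_self:
  fixes x :: "real \<Rightarrow> 'a::real_inner"
  assumes "(x has_vector_derivative x') (at s)"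
  shows "((\<lambda>s. x s \<bullet> x s) has_real_derivative (2 * (x s \<bullet> x'))) (at s)"
  using bounded_bilinear.has_vector_derivative[OF bounded_bilinear_inner assms assms]
  by (simp add: has_real_derivative_iff_has_vector_derivative inner_commute)

text \<open>The weight \<open>exp (-(2A+1)s)\<close> on \<open>|x s|\<^sup>2\<close> absorbs the cross term via
  \<open>2|x|B \<le> |x|\<^sup>2 + B\<^sup>2\<close>.\<close>
lemma ode_energy_estimate:
  fixes x :: "real \<Rightarrow> 'a::real_inner"
  assumes T: "0 \<le> T" and A: "A \<ge> 0" and B: "B \<ge> 0"
    and d: "\<And>s. s \<in> {0..T} \<Longrightarrow> (x has_vector_derivative x' s) (at s)"
    and b: "\<And>s. s \<in> {0..T} \<Longrightarrow> norm (x' s) \<le> A * norm (x s) + B"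
  shows "norm (x T) ^ 2 \<le> exp ((2*A+1)*T) * (norm (x 0) ^ 2 + B^2 * T)"
proof -
  define c where "c = 2*A+1"
  define g where "g s = exp (- c * s) * (x s \<bullet> x s) - B^2 * s" for s
  have "g T \<le> g 0"
  proof (rule DERIV_nonpos_imp_nonincreasing[OF T])
    fix s assume "0 \<le> s" "s \<le> T"
    then have s: "s \<in> {0..T}" by simp
    have dg: "DERIV g s :> exp (- c * s) * (2 * (x s \<bullet> x' s)) - c * exp (- c * s) * (x s \<bullet> x s) - B^2"
      unfolding g_def
      by (auto intro!: derivative_eq_intros has_real_derivative_inner_self[OF d[OF s]])
    have "2 * (x s \<bullet> x' s) \<le> 2 * (norm (x s) * (A * norm (x s) + B))"
      using Cauchy_Schwarz_ineq2[of "x s" "x' s"] b[OF s]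
      by (smt (verit, best) mult_left_mono norm_ge_zero)
    also have "\<dots> \<le> c * (x s \<bullet> x s) + B^2"
      using sum_squares_bound[of "norm (x s)" B]
      by (simp add: c_def power2_norm_eq_inner[symmetric] power2_eq_square algebra_simps)
    finally have "exp (- c * s) * (2 * (x s \<bullet> x' s)) \<le> exp (- c * s) * (c * (x s \<bullet> x s) + B^2)"
      by (simp add: mult_left_mono)
    moreover have "exp (- c * s) * B^2 \<le> B^2"
    proof -
      have "0 \<le> c * s" using \<open>0 \<le> s\<close> A by (simp add: c_def)
      then show ?thesis by (intro mult_left_le_one_le) auto
    qed
    ultimately have "exp (- c * s) * (2 * (x s \<bullet> x' s)) - c * exp (- c * s) * (x s \<bullet> x s) - B^2 \<le> 0"
      by (simp add: algebra_simps)
    with dg show "\<exists>y. DERIV g s :> y \<and> y \<le> 0" by blast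
  qed
  then have "exp (- c * T) * norm (x T)^2 \<le> norm (x 0)^2 + B^2 * T"
    by (simp add: g_def power2_norm_eq_inner)
  then have "exp (c*T) * (exp (- c * T) * norm (x T)^2) \<le> exp (c*T) * (norm (x 0)^2 + B^2 * T)"
    by (simp add: mult_left_mono)
  moreover have "exp (c*T) * (exp (- c * T) * norm (x T)^2) = norm (x T)^2"
    by (simp add: mult.assoc[symmetric] flip: exp_add)
  ultimately have "norm (x T)^2 \<le> exp (c*T) * (norm (x 0)^2 + B^2 * T)"
    by linarith
  then show ?thesis
    by (simp add: c_def)
qed

lemma linear_ode_zero:
  fixes x :: "real \<Rightarrow> 'a::real_inner"
  assumes "0 \<le> T" "A \<ge> 0" "x 0 = 0"
    and "\<And>s. s \<in> {0..T} \<Longrightarrow> (x has_vector_derivative x' s) (at s)"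
    and "\<And>s. s \<in> {0..T} \<Longrightarrow> norm (x' s) \<le> A * norm (x s)"
  shows "x T = 0"
  using ode_energy_estimate[of T A 0 x x'] assms by simp

lemma first_hitting_time:
  fixes f :: "real \<Rightarrow> real"
  assumes f: "continuous_on {0..T} f" and f0: "f 0 < \<rho>" and s1: "s1 \<in> {0..T}" "\<rho> \<le> f s1"
  obtains w where "w \<in> {0..T}" "f w = \<rho>" "\<And>u. u \<in> {0..w} \<Longrightarrow> f u \<le> \<rho>"
proof -
  define S where "S = {0..T} \<inter> f -` {\<rho>..}"
  have "closed S"
    unfolding S_def by (rule continuous_closed_preimage[OF f]) auto
  moreover have "s1 \<in> S" "bdd_below S"
    using s1 by (auto simp: S_def bdd_below_def)
  ultimately have w: "Inf S \<in> S"
    by (intro closed_contains_Inf) auto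
  have below: "f u < \<rho>" if "u \<in> {0..<Inf S}" for u
    using that cInf_lower[OF _ \<open>bdd_below S\<close>, of u] w by (force simp: S_def)
  obtain v where v: "0 \<le> v" "v \<le> Inf S" "f v = \<rho>"
    using IVT'[of f 0 \<rho> "Inf S"] f0 w continuous_on_subset[OF f] by (fastforce simp: S_def)
  with below have "v = Inf S" by fastforce
  show thesis
  proof
    show "Inf S \<in> {0..T}" "f (Inf S) = \<rho>" using w v \<open>v = Inf S\<close> by (auto simp: S_def)
    show "f u \<le> \<rho>" if "u \<in> {0..Inf S}" for u
      using that below[of u] v \<open>v = Inf S\<close> by (cases "u = Inf S") auto
  qed
qed

lemma ode_stays_in_ball:
  fixes x :: "real \<Rightarrow> 'a::real_inner"
  assumes T: "0 \<le> T" and A: "A \<ge> 0" and B: "B \<ge> 0"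
    and d: "\<And>s. s \<in> {0..T} \<Longrightarrow> (x has_vector_derivative x' s) (at s)"
    and b: "\<And>s. s \<in> {0..T} \<Longrightarrow> norm (x s) \<le> \<rho> \<Longrightarrow> norm (x' s) \<le> A * norm (x s) + B"
    and \<rho>: "0 \<le> \<rho>"
    and small: "exp ((2*A+1)*T) * (norm (x 0) ^ 2 + B^2 * T) < \<rho>^2"
  shows "s \<in> {0..T} \<Longrightarrow> norm (x s) < \<rho>"
proof (rule ccontr)
  assume s: "s \<in> {0..T}" and "\<not> norm (x s) < \<rho>"
  have "norm (x 0) ^ 2 \<le> exp ((2*A+1)*T) * (norm (x 0) ^ 2 + B^2 * T)"
  proof -
    have "norm (x 0) ^ 2 \<le> 1 * (norm (x 0) ^ 2 + B^2 * T)" using T by simp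
    also have "\<dots> \<le> exp ((2*A+1)*T) * (norm (x 0) ^ 2 + B^2 * T)"
      using T A by (intro mult_right_mono) auto
    finally show ?thesis .
  qed
  with small have x0: "norm (x 0) < \<rho>"
    by (intro power_less_imp_less_base[OF _ \<rho>, of _ 2]) simp
  have cont: "continuous_on {0..T} (\<lambda>s. norm (x s))"
    using d by (intro continuous_on_norm continuous_at_imp_continuous_on)
      (meson has_vector_derivative_continuous)
  from \<open>\<not> norm (x s) < \<rho>\<close> have "\<rho> \<le> norm (x s)" by simp
  then obtain w where w: "w \<in> {0..T}" "norm (x w) = \<rho>"
    and inside: "\<And>u. u \<in> {0..w} \<Longrightarrow> norm (x u) \<le> \<rho>"
    by (rule first_hitting_time[OF cont x0 s]) blast
  have "norm (x w) ^ 2 \<le> exp ((2*A+1)*w) * (norm (x 0) ^ 2 + B^2 * w)"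
  proof (rule ode_energy_estimate[OF _ A B, of w x x'])
    show "0 \<le> w" using w by simp
    fix u assume u: "u \<in> {0..w}"
    then have "u \<in> {0..T}" using w by auto
    then show "(x has_vector_derivative x' u) (at u)" "norm (x' u) \<le> A * norm (x u) + B"
      using d b inside[OF u] by auto
  qed
  also have "\<dots> \<le> exp ((2*A+1)*T) * (norm (x 0) ^ 2 + B^2 * T)"
    using w A B by (intro mult_mono add_left_mono mult_left_mono) auto
  finally show False using small w by simp
qed

lemma has_vector_derivative_reflect:
  assumes "(f has_vector_derivative f') (at (- t))"
  shows "((\<lambda>\<tau>. f (- \<tau>)) has_vector_derivative - f') (at t)"
proof -
  have "(uminus has_vector_derivative (-1::real)) (at t)"
    by (auto intro!: derivative_eq_intros simp flip: has_real_derivative_iff_has_vector_derivative)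
  from vector_diff_chain_at[OF this] assms show ?thesis
    by (simp add: o_def)
qed

section \<open>Matrix exponentials\<close>

definition expneg_antideriv_coeff :: "nat \<Rightarrow> real" where
  "expneg_antideriv_coeff k = (if k = 0 then 0 else (-1) ^ (k - 1) / fact k)"

definition sinh_half_coeff :: "nat \<Rightarrow> real" where
  "sinh_half_coeff k = (if odd k then (1/2) ^ (k - 1) / fact k else 0)"

definition cosh_half_coeff :: "nat \<Rightarrow> real" where
  "cosh_half_coeff k = (if even k then (1/2) ^ k / fact k else 0)"

text \<open>\<open>expm_neg D s = exp (-s D)\<close>, \<open>expm_neg_integral D s = (1 - exp (-s D)) / D\<close>,
  \<open>sinhc_half D s = sinh (s D / 2) / (D / 2)\<close> and \<open>cosh_half D s = cosh (s D / 2)\<close>.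
  The truncated subtraction in \<open>mpow D (k - 1)\<close> is harmless: the \<open>0\<close>-th coefficient vanishes.\<close>

definition expm_neg :: "real^'n^'n \<Rightarrow> real \<Rightarrow> real^'n^'n" where
  "expm_neg D = power_series (expneg_coeff 1) (mpow D)"

definition expm_neg_integral :: "real^'n^'n \<Rightarrow> real \<Rightarrow> real^'n^'n" where
  "expm_neg_integral D = power_series expneg_antideriv_coeff (\<lambda>k. mpow D (k - 1))"

definition sinhc_half :: "real^'n^'n \<Rightarrow> real \<Rightarrow> real^'n^'n" where
  "sinhc_half D = power_series sinh_half_coeff (\<lambda>k. mpow D (k - 1))"

definition cosh_half :: "real^'n^'n \<Rightarrow> real \<Rightarrow> real^'n^'n" where
  "cosh_half D = power_series cosh_half_coeff (mpow D)"

lemma entire_coeffs_expneg: "entire_coeffs (expneg_coeff 1)"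
  by (rule entire_coeffs_if_fact_bound) (simp add: expneg_coeff_def abs_divide)

lemma entire_coeffs_expneg_antideriv: "entire_coeffs expneg_antideriv_coeff"
  by (rule entire_coeffs_if_fact_bound) (simp add: expneg_antideriv_coeff_def abs_divide)

lemma entire_coeffs_sinh_half: "entire_coeffs sinh_half_coeff"
proof (rule entire_coeffs_if_fact_bound)
  fix k
  have "(1/2::real) ^ (k - 1) \<le> 1" by (rule power_le_one) auto
  then show "\<bar>sinh_half_coeff k\<bar> \<le> 1 / fact k"
    by (simp add: sinh_half_coeff_def abs_divide divide_right_mono)
qed

lemma entire_coeffs_cosh_half: "entire_coeffs cosh_half_coeff"
proof (rule entire_coeffs_if_fact_bound)
  fix k
  have "(1/2::real) ^ k \<le> 1" by (rule power_le_one) auto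
  then show "\<bar>cosh_half_coeff k\<bar> \<le> 1 / fact k"
    by (simp add: cosh_half_coeff_def abs_divide divide_right_mono)
qed

lemma diffs_expneg: "diffs (expneg_coeff 1) = (\<lambda>k. - expneg_coeff 1 k)"
  by (simp add: fun_eq_iff diffs_def expneg_coeff_def divide_simps del: fact_Suc)
     (simp add: algebra_simps)

lemma diffs_expneg_antideriv: "diffs expneg_antideriv_coeff = expneg_coeff 1"
  by (simp add: fun_eq_iff diffs_def expneg_coeff_def expneg_antideriv_coeff_def divide_simps
      del: fact_Suc) (simp add: algebra_simps)

lemma diffs_sinh_half: "diffs sinh_half_coeff = cosh_half_coeff"
  by (simp add: fun_eq_iff diffs_def sinh_half_coeff_def cosh_half_coeff_def divide_simps
      del: fact_Suc) (simp add: algebra_simps)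

lemma expm_neg_has_vector_derivative:
  "(expm_neg D has_vector_derivative - (D ** expm_neg D s)) (at s)"
proof -
  have "- (D ** expm_neg D s) = power_series (expneg_coeff 1) (\<lambda>k. - (D ** mpow D k)) s"
    unfolding expm_neg_def
    by (rule bounded_linear_power_series[OF bounded_linear_minus[OF matrix_mult.bounded_linear_right]
          entire_coeffs_expneg geom_bounded_mpow])
  also have "\<dots> = power_series (diffs (expneg_coeff 1)) (\<lambda>k. mpow D (Suc k)) s"
    by (simp add: power_series_def diffs_expneg)
  finally show ?thesis
    unfolding expm_neg_def
    using power_series_has_vector_derivative[OF entire_coeffs_expneg geom_bounded_mpow] by simp
qed

lemma expm_neg_integral_has_vector_derivative:
  "(expm_neg_integral D has_vector_derivative expm_neg D s) (at s)"
  using power_series_has_vector_derivative[OF entire_coeffs_expneg_antideriv geom_bounded_mpow_pred]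
  by (simp add: expm_neg_integral_def expm_neg_def diffs_expneg_antideriv)

lemma sinhc_half_has_vector_derivative:
  "(sinhc_half D has_vector_derivative cosh_half D s) (at s)"
  using power_series_has_vector_derivative[OF entire_coeffs_sinh_half geom_bounded_mpow_pred]
  by (simp add: sinhc_half_def cosh_half_def diffs_sinh_half)

lemma expm_neg_0: "expm_neg D 0 = mat 1"
  unfolding expm_neg_def by (subst power_series_eq_head) (auto simp: expneg_coeff_def)

lemma expm_neg_integral_0: "expm_neg_integral D 0 = 0"
  unfolding expm_neg_integral_def
  by (subst power_series_eq_head) (auto simp: expneg_antideriv_coeff_def)

lemma sinhc_half_0: "sinhc_half D 0 = 0"
  unfolding sinhc_half_def by (subst power_series_eq_head) (auto simp: sinh_half_coeff_def)

lemma expm_neg_commute: "D ** expm_neg D s = expm_neg D s ** D"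
  unfolding expm_neg_def
  by (simp add: matrix_mult_power_series[OF entire_coeffs_expneg geom_bounded_mpow]
      power_series_matrix_mult[OF entire_coeffs_expneg geom_bounded_mpow] mpow_commute)

lemma expm_neg_add_mult_integral: "expm_neg D s + D ** expm_neg_integral D s = mat 1"
proof -
  have "expm_neg D s + D ** expm_neg_integral D s
      = 1 *\<^sub>R power_series (expneg_coeff 1) (mpow D) s + 1 *\<^sub>R power_series expneg_antideriv_coeff (mpow D) s"
    unfolding expm_neg_def expm_neg_integral_def
    using mult_mpow_pred_series[OF entire_coeffs_expneg_antideriv, of D s]
    by (simp add: expneg_antideriv_coeff_def)
  also have "\<dots> = power_series (\<lambda>k. 1 * expneg_coeff 1 k + 1 * expneg_antideriv_coeff k) (mpow D) s"
    by (rule power_series_lincomb[OF entire_coeffs_expneg entire_coeffs_expneg_antideriv geom_bounded_mpow])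
  also have "\<dots> = mat 1"
    by (subst power_series_eq_head)
       (auto simp: expneg_coeff_def expneg_antideriv_coeff_def add_divide_distrib[symmetric] gr0_conv_Suc)
  finally show ?thesis .
qed

lemma expm_neg_affine_has_vector_derivative:
  "((\<lambda>\<tau>. expm_neg D (c * \<tau> + s)) has_vector_derivative c *\<^sub>R - (D ** expm_neg D (c * \<tau> + s))) (at \<tau>)"
proof -
  have "((\<lambda>\<tau>. c * \<tau> + s) has_vector_derivative c) (at \<tau>)"
    by (auto intro!: derivative_eq_intros simp flip: has_real_derivative_iff_has_vector_derivative)
  from vector_diff_chain_at[OF this expm_neg_has_vector_derivative] show ?thesis
    by (simp add: o_def)
qed

lemma expm_neg_add:
  assumes "0 \<le> t"
  shows "expm_neg D s ** expm_neg D t = expm_neg D (s + t)"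
proof -
  define W where "W \<tau> = expm_neg D s ** expm_neg D \<tau> - expm_neg D (s + \<tau>)" for \<tau>
  have "W t = 0"
  proof (rule linear_ode_zero[OF assms norm_ge_zero[of D]])
    show "W 0 = 0" by (simp add: W_def expm_neg_0)
    fix \<tau>
    have shift: "((\<lambda>\<tau>. expm_neg D (s + \<tau>)) has_vector_derivative - (D ** expm_neg D (s + \<tau>))) (at \<tau>)"
      using expm_neg_affine_has_vector_derivative[of D 1 s \<tau>] by (simp add: add.commute)
    have "(W has_vector_derivative
        expm_neg D s ** - (D ** expm_neg D \<tau>) + 0 ** expm_neg D \<tau> - - (D ** expm_neg D (s + \<tau>))) (at \<tau>)"
      unfolding W_def
      by (intro has_vector_derivative_diff matrix_mult.has_vector_derivative has_vector_derivative_const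
          expm_neg_has_vector_derivative shift)
    also have "expm_neg D s ** - (D ** expm_neg D \<tau>) + 0 ** expm_neg D \<tau> - - (D ** expm_neg D (s + \<tau>))
        = - (D ** W \<tau>)"
    proof -
      have "expm_neg D s ** (D ** expm_neg D \<tau>) = D ** (expm_neg D s ** expm_neg D \<tau>)"
        by (metis matrix_mul_assoc expm_neg_commute)
      then show ?thesis
        by (simp add: W_def matrix_mult.minus_right matrix_mult.diff_right)
    qed
    finally show "(W has_vector_derivative - (D ** W \<tau>)) (at \<tau>)" .
    show "norm (- (D ** W \<tau>)) \<le> norm D * norm (W \<tau>)"
      by (simp add: norm_matrix_mult_le)
  qed
  then show ?thesis by (simp add: W_def)
qed

lemma expm_neg_orthogonal:
  assumes D: "transpose D = - D" and t: "0 \<le> t"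
  shows "orthogonal_matrix (expm_neg D t)"
proof -
  define G where "G \<tau> = transpose (expm_neg D \<tau>) ** expm_neg D \<tau> - mat 1" for \<tau>
  have "G t = 0"
  proof (rule linear_ode_zero[OF t order_refl])
    show "G 0 = 0" by (simp add: G_def expm_neg_0)
    fix \<tau>
    have "transpose (- (D ** expm_neg D \<tau>)) = - (transpose (expm_neg D \<tau>) ** transpose D)"
      by (simp add: transpose_uminus matrix_transpose_mul)
    also have "\<dots> = transpose (expm_neg D \<tau>) ** D"
      by (simp add: D matrix_mult.minus_right)
    moreover have "(G has_vector_derivative
        transpose (expm_neg D \<tau>) ** - (D ** expm_neg D \<tau>) + transpose (- (D ** expm_neg D \<tau>)) ** expm_neg D \<tau> - 0)
        (at \<tau>)"
      unfolding G_def
      by (intro has_vector_derivative_diff matrix_mult.has_vector_derivative has_vector_derivative_const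
          bounded_linear.has_vector_derivative[OF bounded_linear_transpose] expm_neg_has_vector_derivative)
    ultimately show "(G has_vector_derivative 0) (at \<tau>)"
      by (simp add: matrix_mult.minus_right matrix_mul_assoc)
  qed auto
  then show ?thesis by (simp add: G_def orthogonal_matrix)
qed

lemma cosh_half_diff_sinhc_half: "cosh_half D s - (1/2) *\<^sub>R (D ** sinhc_half D s) = expm_neg D (s/2)"
proof -
  have "cosh_half D s - (1/2) *\<^sub>R (D ** sinhc_half D s)
      = 1 *\<^sub>R power_series cosh_half_coeff (mpow D) s + (- 1/2) *\<^sub>R power_series sinh_half_coeff (mpow D) s"
    unfolding cosh_half_def sinhc_half_def
    using mult_mpow_pred_series[OF entire_coeffs_sinh_half, of D s] by (simp add: sinh_half_coeff_def)
  also have "\<dots> = power_series (\<lambda>k. 1 * cosh_half_coeff k + (- 1/2) * sinh_half_coeff k) (mpow D) s"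
    by (rule power_series_lincomb[OF entire_coeffs_cosh_half entire_coeffs_sinh_half geom_bounded_mpow])
  also have "\<dots> = expm_neg D (s/2)"
    unfolding expm_neg_def power_series_def
  proof (intro arg_cong[where f=suminf] ext)
    fix k
    have "cosh_half_coeff k - sinh_half_coeff k / 2 = expneg_coeff 1 k * (1/2) ^ k"
    proof (cases "even k")
      case False
      then obtain m where "k = Suc (2 * m)" by (metis oddE Suc_eq_plus1)
      then show ?thesis by (simp add: cosh_half_coeff_def sinh_half_coeff_def expneg_coeff_def)
    qed (simp add: cosh_half_coeff_def sinh_half_coeff_def expneg_coeff_def)
    then show "((1 * cosh_half_coeff k + (- 1/2) * sinh_half_coeff k) * s ^ k) *\<^sub>R mpow D k
        = (expneg_coeff 1 k * (s / 2) ^ k) *\<^sub>R mpow D k"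
      by (simp add: power_divide algebra_simps)
  qed
  finally show ?thesis .
qed

lemma expm_neg_integral_factor:
  assumes "0 \<le> s"
  shows "expm_neg_integral D s = expm_neg D (s/2) ** sinhc_half D s"
proof -
  define Z where "Z \<sigma> = expm_neg D (\<sigma>/2) ** sinhc_half D \<sigma> - expm_neg_integral D \<sigma>" for \<sigma>
  have "Z s = 0"
  proof (rule linear_ode_zero[OF assms order_refl])
    show "Z 0 = 0" by (simp add: Z_def sinhc_half_0 expm_neg_integral_0)
    fix \<sigma> :: real assume \<sigma>: "\<sigma> \<in> {0..s}"
    have half: "((\<lambda>\<sigma>. expm_neg D (\<sigma>/2)) has_vector_derivative (1/2) *\<^sub>R - (D ** expm_neg D (\<sigma>/2))) (at \<sigma>)"
      using expm_neg_affine_has_vector_derivative[of D "1/2" 0 \<sigma>] by simp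
    have "(Z has_vector_derivative
        expm_neg D (\<sigma>/2) ** cosh_half D \<sigma> + ((1/2) *\<^sub>R - (D ** expm_neg D (\<sigma>/2))) ** sinhc_half D \<sigma>
          - expm_neg D \<sigma>) (at \<sigma>)"
      unfolding Z_def
      by (intro has_vector_derivative_diff matrix_mult.has_vector_derivative half
          sinhc_half_has_vector_derivative expm_neg_integral_has_vector_derivative)
    also have "expm_neg D (\<sigma>/2) ** cosh_half D \<sigma> + ((1/2) *\<^sub>R - (D ** expm_neg D (\<sigma>/2))) ** sinhc_half D \<sigma>
        = expm_neg D (\<sigma>/2) ** (cosh_half D \<sigma> - (1/2) *\<^sub>R (D ** sinhc_half D \<sigma>))"
    proof -
      have "(D ** expm_neg D (\<sigma>/2)) ** sinhc_half D \<sigma> = expm_neg D (\<sigma>/2) ** (D ** sinhc_half D \<sigma>)"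
        by (metis matrix_mul_assoc expm_neg_commute)
      then show ?thesis
        by (simp add: matrix_mult.scaleR_left matrix_mult.scaleR_right matrix_mult.minus_left
            matrix_mult.diff_right)
    qed
    also have "\<dots> = expm_neg D \<sigma>"
      using expm_neg_add[of "\<sigma>/2" D "\<sigma>/2"] \<sigma> by (simp add: cosh_half_diff_sinhc_half)
    finally show "(Z has_vector_derivative 0) (at \<sigma>)" by simp
  qed auto
  then show ?thesis by (simp add: Z_def)
qed

lemma det_expm_neg_integral:
  assumes "transpose D = - D"
  shows "det (expm_neg_integral D 1) = det (sinhc_half D 1)"
proof -
  have "expm_neg D (1/2) = expm_neg D (1/4) ** expm_neg D (1/4)"
    using expm_neg_add[of "1/4" D "1/4"] by simp
  then have "det (expm_neg D (1/2)) = det (expm_neg D (1/4)) ^ 2"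
    by (simp add: det_mul power2_eq_square)
  moreover have "det (expm_neg D (1/2)) = 1 \<or> det (expm_neg D (1/2)) = - 1"
    by (intro det_orthogonal_matrix expm_neg_orthogonal assms) simp
  ultimately have "det (expm_neg D (1/2)) = 1"
    by (metis zero_le_power2 neg_0_le_iff_le not_one_le_zero)
  then show ?thesis
    by (simp add: expm_neg_integral_factor det_mul)
qed

lemma mat_series_expneg_coeff: "mat_series (expneg_coeff t) D = expm_neg D t"
  unfolding mat_series_def expm_neg_def power_series_def expneg_coeff_def
  by (simp add: power_minus[of t] mult_ac)

lemma mat_series_oneminusexp_div_coeff: "mat_series (oneminusexp_div_coeff t) D = expm_neg_integral D t"
  using power_series_mpow_pred[OF entire_coeffs_expneg_antideriv, of D t]
  by (simp add: expm_neg_integral_def expneg_antideriv_coeff_def mat_series_def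
      oneminusexp_div_coeff_def mult_ac)

lemma mat_series_sinhc_half_coeff: "mat_series sinhc_half_coeff D = sinhc_half D 1"
proof -
  have "sinh_half_coeff (Suc j) = sinhc_half_coeff j" for j
    by (simp add: sinh_half_coeff_def sinhc_half_coeff_def)
  then show ?thesis
    using power_series_mpow_pred[OF entire_coeffs_sinh_half, of D 1]
    by (simp add: sinhc_half_def sinh_half_coeff_def mat_series_def)
qed

lemma expm_neg_uminus: "expm_neg (- D) t = expm_neg D (- t)"
  unfolding expm_neg_def power_series_def
  by (simp add: mpow_uminus power_minus[of t] mult_ac)

lemma expm_neg_integral_uminus: "expm_neg_integral (- D) t = - expm_neg_integral D (- t)"
proof -
  have "(\<lambda>k. (expneg_antideriv_coeff k * t ^ k) *\<^sub>R mpow (- D) (k - 1))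
      = (\<lambda>k. (expneg_antideriv_coeff k * (- t) ^ k) *\<^sub>R - mpow D (k - 1))"
  proof
    show "(expneg_antideriv_coeff k * t ^ k) *\<^sub>R mpow (- D) (k - 1)
        = (expneg_antideriv_coeff k * (- t) ^ k) *\<^sub>R - mpow D (k - 1)" for k
      by (cases k) (simp_all add: expneg_antideriv_coeff_def mpow_uminus power_minus[of t])
  qed
  then show ?thesis
    unfolding expm_neg_integral_def
    using bounded_linear_power_series[OF bounded_linear_minus[OF bounded_linear_ident]
        entire_coeffs_expneg_antideriv geom_bounded_mpow_pred, of D "- t"]
    by (simp add: power_series_def)
qed

section \<open>The operator \<open>sqrt K cot (sqrt K)\<close>\<close>

definition zcot :: "complex \<Rightarrow> complex" where
  "zcot z = (if z = 0 then 1 else z * cos z / sin z)"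

lemma sin_nonzero_in_ball: "norm (z::complex) < pi \<Longrightarrow> z \<noteq> 0 \<Longrightarrow> sin z \<noteq> 0"
proof
  assume z: "norm z < pi" "z \<noteq> 0" and "sin z = 0"
  then obtain n :: int where n: "z = of_real (n * pi)" by (auto simp: sin_eq_0)
  with z have "n \<noteq> 0" by auto
  then have "1 \<le> \<bar>real_of_int n\<bar>" by linarith
  then have "pi \<le> \<bar>real_of_int n\<bar> * pi" by simp
  also have "\<dots> = norm z" unfolding n norm_of_real by (simp add: abs_mult)
  finally show False using z by simp
qed

lemma tendsto_zcot_0: "(zcot \<longlongrightarrow> 1) (at 0)"
proof -
  have "(sin has_field_derivative cos 0) (at (0::complex))" by (rule DERIV_sin)
  then have "((\<lambda>y. (sin y - sin 0) / (y - 0)) \<longlongrightarrow> cos 0) (at (0::complex))"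
    by (simp only: has_field_derivative_iff)
  then have s: "((\<lambda>y. sin y / y) \<longlongrightarrow> 1) (at (0::complex))" by simp
  have "((\<lambda>y. cos y / (sin y / y)) \<longlongrightarrow> cos 0 / 1) (at (0::complex))"
    by (intro tendsto_intros s) auto
  then have "((\<lambda>y. cos y / (sin y / y)) \<longlongrightarrow> 1) (at (0::complex))" by simp
  moreover have "\<forall>\<^sub>F y in at (0::complex). cos y / (sin y / y) = zcot y"
    unfolding eventually_at
  proof (intro exI[of _ pi] conjI ballI impI)
    fix y :: complex assume y: "y \<in> UNIV" "y \<noteq> 0 \<and> dist y 0 < pi"
    then have "sin y \<noteq> 0" using sin_nonzero_in_ball[of y] by (simp add: dist_norm)
    then show "cos y / (sin y / y) = zcot y" using y by (simp add: zcot_def field_simps)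
  qed simp
  ultimately show ?thesis by (rule Lim_transform_eventually)
qed

lemma holomorphic_on_zcot: "zcot holomorphic_on ball 0 pi"
proof (rule no_isolated_singularity'[where K="{0}"])
  show "(zcot \<longlongrightarrow> zcot z) (at z within ball 0 pi)" if "z \<in> {0}" for z
    using that tendsto_zcot_0 by (auto simp: zcot_def intro: tendsto_within_subset)
  have "(\<lambda>z. z * cos z / sin z) holomorphic_on (ball 0 pi - {0})"
    using sin_nonzero_in_ball by (intro holomorphic_intros) auto
  then show "zcot holomorphic_on (ball 0 pi - {0})"
    by (rule holomorphic_transform) (auto simp: zcot_def)
qed auto

lemma higher_deriv_wcot_eq_Re: "\<bar>x\<bar> < pi \<Longrightarrow> (deriv ^^ n) wcot x = Re ((deriv ^^ n) zcot (of_real x))"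
proof (induction n arbitrary: x)
  case 0
  show ?case
    by (simp add: wcot_def zcot_def sin_of_real[symmetric] cos_of_real[symmetric] flip: of_real_mult of_real_divide)
next
  case (Suc n)
  define g where "g = (deriv ^^ n) zcot"
  have gh: "g holomorphic_on ball 0 pi" unfolding g_def by (intro holomorphic_higher_deriv holomorphic_on_zcot) auto
  have ev: "\<forall>\<^sub>F y in nhds x. (deriv ^^ n) wcot y = Re (g (of_real y))"
  proof -
    have "\<forall>\<^sub>F y in nhds x. y \<in> {-pi<..<pi}"
      using Suc.prems by (intro eventually_nhds_in_open) auto
    then show ?thesis by eventually_elim (use Suc.IH g_def in auto)
  qed
  have "(g has_field_derivative deriv g (of_real x)) (at (of_real x))"
    by (rule holomorphic_derivI[OF gh]) (use Suc.prems in auto)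
  then have "((g \<circ> of_real) has_vector_derivative (1 * deriv g (of_real x))) (at x)"
    by (intro field_vector_diff_chain_at) (auto intro: has_vector_derivative_of_real[of "\<lambda>x. x" 1, simplified] DERIV_ident)
  then have "((\<lambda>y. Re (g (of_real y))) has_vector_derivative Re (deriv g (of_real x))) (at x)"
    using bounded_linear.has_vector_derivative[OF bounded_linear_Re] by (simp add: o_def)
  then have "((\<lambda>y. Re (g (of_real y))) has_real_derivative Re (deriv g (of_real x))) (at x)"
    by (simp add: has_real_derivative_iff_has_vector_derivative)
  then have "deriv (\<lambda>y. Re (g (of_real y))) x = Re (deriv g (of_real x))" by (rule DERIV_imp_deriv)
  moreover have "deriv ((deriv ^^ n) wcot) x = deriv (\<lambda>y. Re (g (of_real y))) x"
    by (rule deriv_cong_ev[OF ev refl])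
  ultimately show ?case by (simp add: g_def)
qed

text \<open>Cauchy's inequality for \<open>zcot\<close> on the circle \<open>|z| = 3\<close>, inside the disc \<open>|z| < pi\<close>
  where it is holomorphic.\<close>
lemma sqrtcot_coeff_bound: "\<exists>B\<ge>0. \<forall>k. \<bar>sqrtcot_coeff k\<bar> \<le> B / 9 ^ k"
proof -
  have cb: "cball (0::complex) 3 \<subseteq> ball 0 pi" using pi_gt3 by auto
  have cont: "continuous_on (cball 0 3) zcot"
    using holomorphic_on_imp_continuous_on[OF holomorphic_on_zcot] cb continuous_on_subset by blast
  have "compact (zcot ` sphere 0 3)"
    by (rule compact_continuous_image[OF continuous_on_subset[OF cont] compact_sphere]) auto
  then have "bounded (zcot ` sphere 0 3)" by (rule compact_imp_bounded)
  then obtain B where B0: "\<forall>x\<in>zcot ` sphere 0 3. norm x \<le> B" unfolding bounded_iff by blast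
  have B: "norm (zcot z) \<le> B" if "z \<in> sphere 0 3" for z using B0 that by blast
  have "norm (zcot 3) \<le> B" by (rule B) simp
  then have B0: "0 \<le> B" using norm_ge_zero order_trans by blast
  have ci: "norm ((deriv ^^ n) zcot 0) \<le> fact n * B / 3 ^ n" for n
    by (rule Cauchy_inequality[OF holomorphic_on_subset[OF holomorphic_on_zcot] cont])
       (use B pi_gt3 in \<open>auto simp: dist_norm\<close>)
  have "\<bar>sqrtcot_coeff k\<bar> \<le> B / 9 ^ k" for k
  proof -
    have "\<bar>sqrtcot_coeff k\<bar> = \<bar>Re ((deriv ^^ (2*k)) zcot 0)\<bar> / fact (2*k)"
      using higher_deriv_wcot_eq_Re[of 0 "2*k"] by (simp add: sqrtcot_coeff_def)
    also have "\<dots> \<le> norm ((deriv ^^ (2*k)) zcot 0) / fact (2*k)"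
      by (intro divide_right_mono abs_Re_le_cmod) auto
    also have "\<dots> \<le> (fact (2*k) * B / 3 ^ (2*k)) / fact (2*k)"
      by (intro divide_right_mono ci) auto
    also have "\<dots> = B / 9 ^ k" by (simp add: power_mult)
    finally show ?thesis .
  qed
  with B0 show ?thesis by blast
qed

lemma sqrtcot_coeff_0: "sqrtcot_coeff 0 = 1"
  by (simp add: sqrtcot_coeff_def wcot_def)

lemma norm_mat_series_sqrtcot_diff_id_le: "\<exists>C0\<ge>0. \<forall>K::real^'n^'n. norm K \<le> 1 \<longrightarrow>
    norm (mat_series sqrtcot_coeff K - mat 1) \<le> C0 * norm K"
proof -
  obtain B where B0: "B \<ge> 0" and B: "\<And>k. \<bar>sqrtcot_coeff k\<bar> \<le> B / 9 ^ k"
    using sqrtcot_coeff_bound by blast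
  define N where "N = norm (mat 1 :: real^'n^'n)"
  have N0: "N \<ge> 0" by (simp add: N_def)
  show ?thesis
  proof (intro exI[of _ "B * N"] conjI allI impI)
    show "0 \<le> B * N" using B0 N0 by simp
    fix K :: "real^'n^'n" assume K: "norm K \<le> 1"
    define g where "g j = sqrtcot_coeff (Suc j) *\<^sub>R mpow K (Suc j)" for j
    define h where "h j = (norm K * B * N / 9) * (1/9) ^ j" for j
    have gh: "norm (g j) \<le> h j" for j
    proof -
      have "norm (g j) = \<bar>sqrtcot_coeff (Suc j)\<bar> * norm (mpow K (Suc j))" by (simp add: g_def)
      also have "\<dots> \<le> (B / 9 ^ Suc j) * (N * norm K ^ Suc j)"
        by (intro mult_mono B norm_mpow_le[of K "Suc j", folded N_def]) (auto simp: B0)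
      also have "norm K ^ Suc j \<le> norm K"
        using K by (simp add: power_le_one mult_right_le_one_le)
      then have "(B / 9 ^ Suc j) * (N * norm K ^ Suc j) \<le> (B / 9 ^ Suc j) * (N * norm K)"
        using B0 N0 by (intro mult_left_mono) auto
      also have "\<dots> = h j" by (simp add: h_def power_divide field_simps)
      finally show ?thesis .
    qed
    have sh: "summable h" unfolding h_def by (intro summable_mult summable_geometric) simp
    have sng: "summable (\<lambda>j. norm (g j))" by (rule summable_comparison_test[OF _ sh]) (use gh in auto)
    have sg: "summable g" by (rule summable_norm_cancel[OF sng])
    have "summable (\<lambda>k. sqrtcot_coeff k *\<^sub>R mpow K k)"
      using sg unfolding g_def by (subst summable_Suc_iff[symmetric]) simp
    then have "mat_series sqrtcot_coeff K - mat 1 = suminf g"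
      unfolding mat_series_def g_def by (subst suminf_split_head) (auto simp: sqrtcot_coeff_0)
    then have "norm (mat_series sqrtcot_coeff K - mat 1) \<le> (\<Sum>j. norm (g j))"
      using summable_norm[OF sng] by simp
    also have "\<dots> \<le> suminf h" by (rule suminf_le[OF gh sng sh])
    also have "suminf h = norm K * B * N / 8"
      unfolding h_def by (subst suminf_mult) (auto simp: suminf_geometric)
    also have "\<dots> \<le> B * N * norm K" using B0 N0 by (simp add: mult_ac)
    finally show "norm (mat_series sqrtcot_coeff K - mat 1) \<le> B * N * norm K" .
  qed
qed

lemma norm_Kmat_le: "\<exists>\<kappa>\<ge>0. \<forall>y. norm (Kmat E \<beta> y) \<le> \<kappa> * norm y ^ 2"
proof (intro exI[of _ "\<Sum>a\<in>UNIV. \<Sum>b\<in>UNIV. \<Sum>c\<in>UNIV. \<Sum>d\<in>UNIV. \<bar>curv E \<beta> a c b d\<bar>"] conjI allI)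
  show "0 \<le> (\<Sum>a\<in>UNIV. \<Sum>b\<in>UNIV. \<Sum>c\<in>UNIV. \<Sum>d\<in>UNIV. \<bar>curv E \<beta> a c b d\<bar>)"
    by (intro sum_nonneg) auto
  fix y
  have ent: "\<bar>Kmat E \<beta> y $ a $ b\<bar> \<le> (\<Sum>c\<in>UNIV. \<Sum>d\<in>UNIV. \<bar>curv E \<beta> a c b d\<bar>) * norm y ^ 2" for a b
  proof -
    have "\<bar>Kmat E \<beta> y $ a $ b\<bar> \<le> (\<Sum>c\<in>UNIV. \<Sum>d\<in>UNIV. \<bar>curv E \<beta> a c b d * y $ c * y $ d\<bar>)"
      unfolding Kmat_def by (simp add: order_trans[OF sum_abs sum_mono[OF sum_abs]])
    also have "\<dots> \<le> (\<Sum>c\<in>UNIV. \<Sum>d\<in>UNIV. \<bar>curv E \<beta> a c b d\<bar> * norm y ^ 2)"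
    proof (intro sum_mono)
      fix c d
      have "\<bar>y $ c\<bar> * \<bar>y $ d\<bar> \<le> norm y * norm y"
        by (intro mult_mono component_le_norm_cart) auto
      then show "\<bar>curv E \<beta> a c b d * y $ c * y $ d\<bar> \<le> \<bar>curv E \<beta> a c b d\<bar> * norm y ^ 2"
        by (simp add: abs_mult power2_eq_square mult.assoc mult_left_mono)
    qed
    finally show ?thesis by (simp add: sum_distrib_right)
  qed
  have "norm (Kmat E \<beta> y) \<le> (\<Sum>a\<in>UNIV. \<Sum>b\<in>UNIV. \<bar>Kmat E \<beta> y $ a $ b\<bar>)" by (rule norm_matrix_le_sum_abs)
  also have "\<dots> \<le> (\<Sum>a\<in>UNIV. \<Sum>b\<in>UNIV. (\<Sum>c\<in>UNIV. \<Sum>d\<in>UNIV. \<bar>curv E \<beta> a c b d\<bar>) * norm y ^ 2)"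
    by (intro sum_mono ent)
  finally show "norm (Kmat E \<beta> y) \<le> (\<Sum>a\<in>UNIV. \<Sum>b\<in>UNIV. \<Sum>c\<in>UNIV. \<Sum>d\<in>UNIV. \<bar>curv E \<beta> a c b d\<bar>) * norm y ^ 2"
    by (simp add: sum_distrib_right)
qed

lemma norm_sqrtcot_Kmat_diff_id_le:
  fixes E :: "'m::finite \<Rightarrow> real^'n^'n"
  shows "\<exists>\<rho>>0. \<exists>C\<ge>0. \<forall>z. norm z \<le> \<rho> \<longrightarrow>
     norm (mat_series sqrtcot_coeff (Kmat E \<beta> z) - mat 1) \<le> C * norm z ^ 2"
proof -
  obtain C where C: "C \<ge> 0"
    and C_le: "\<And>K::real^'n^'n. norm K \<le> 1 \<Longrightarrow> norm (mat_series sqrtcot_coeff K - mat 1) \<le> C * norm K"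
    using norm_mat_series_sqrtcot_diff_id_le by blast
  obtain \<kappa> where \<kappa>: "\<kappa> \<ge> 0" and \<kappa>_le: "\<And>y. norm (Kmat E \<beta> y) \<le> \<kappa> * norm y ^ 2"
    using norm_Kmat_le by blast
  define \<rho> where "\<rho> = 1 / (\<kappa> + 1)"
  have "norm (mat_series sqrtcot_coeff (Kmat E \<beta> z) - mat 1) \<le> (C * \<kappa>) * norm z ^ 2"
    if z: "norm z \<le> \<rho>" for z
  proof -
    have "\<kappa> * norm z ^ 2 \<le> \<kappa> * \<rho> ^ 2"
      using z \<kappa> by (intro mult_left_mono power_mono) auto
    also have "\<kappa> * \<rho> ^ 2 \<le> 1"
    proof -
      have "\<kappa> \<le> (\<kappa> + 1) ^ 2" using \<kappa> by (simp add: power2_eq_square algebra_simps)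
      then show ?thesis using \<kappa> by (simp add: \<rho>_def power_divide divide_le_eq_1)
    qed
    finally have "norm (Kmat E \<beta> z) \<le> 1" using \<kappa>_le[of z] by linarith
    then have "norm (mat_series sqrtcot_coeff (Kmat E \<beta> z) - mat 1) \<le> C * norm (Kmat E \<beta> z)"
      by (rule C_le)
    also have "\<dots> \<le> C * (\<kappa> * norm z ^ 2)" using C \<kappa>_le by (intro mult_left_mono) auto
    finally show ?thesis by (simp add: mult_ac)
  qed
  moreover have "\<rho> > 0" "C * \<kappa> \<ge> 0" using \<kappa> C by (auto simp: \<rho>_def)
  ultimately show ?thesis by blast
qed

lemma Dom_transpose:
  assumes E_antisym: "\<And>i a b. E i $ a $ b = - (E i $ b $ a)"
  shows "transpose (Dom E \<beta> \<omega>) = - Dom E \<beta> \<omega>"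
proof -
  have "transpose (Dom E \<beta> \<omega>) $ a $ b = (- Dom E \<beta> \<omega>) $ a $ b" for a b
  proof -
    have "transpose (Dom E \<beta> \<omega>) $ a $ b = (\<Sum>i\<in>UNIV. \<omega> $ i * - (\<Sum>k\<in>UNIV. \<beta> $ i $ k * E k $ b $ a))"
      by (simp add: Dom_def Dgen_def transpose_def)
    also have "\<dots> = (\<Sum>i\<in>UNIV. - (\<omega> $ i * - (\<Sum>k\<in>UNIV. \<beta> $ i $ k * E k $ a $ b)))"
      by (simp add: E_antisym[of _ b a] sum_negf)
    also have "\<dots> = (- Dom E \<beta> \<omega>) $ a $ b"
      by (simp add: Dom_def Dgen_def sum_negf)
    finally show ?thesis .
  qed
  then show ?thesis by (simp add: vec_eq_iff)
qed

section \<open>Linearisation of the flow\<close>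

lemma linear_deviation_has_vector_derivative:
  assumes "(z has_vector_derivative A *v p - D *v z \<tau>) (at \<tau>)"
  shows "((\<lambda>\<tau>. z \<tau> - (expm_neg D \<tau> *v y + expm_neg_integral D \<tau> *v p)) has_vector_derivative
    (A - mat 1) *v p - D *v (z \<tau> - (expm_neg D \<tau> *v y + expm_neg_integral D \<tau> *v p))) (at \<tau>)"
proof -
  have "((\<lambda>\<tau>. z \<tau> - (expm_neg D \<tau> *v y + expm_neg_integral D \<tau> *v p)) has_vector_derivative
      (A *v p - D *v z \<tau>) - (- (D ** expm_neg D \<tau>) *v y + expm_neg D \<tau> *v p)) (at \<tau>)"
    by (intro has_vector_derivative_diff has_vector_derivative_add assms
        bounded_linear.has_vector_derivative[OF matrix_vector_mult.bounded_linear_left]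
        expm_neg_has_vector_derivative expm_neg_integral_has_vector_derivative)
  moreover have "expm_neg D \<tau> *v p = p - D *v (expm_neg_integral D \<tau> *v p)"
  proof -
    have "(expm_neg D \<tau> + D ** expm_neg_integral D \<tau>) *v p = p"
      by (simp add: expm_neg_add_mult_integral)
    then show ?thesis
      by (simp add: matrix_vector_mult_add_rdistrib matrix_vector_mul_assoc eq_diff_eq)
  qed
  moreover have "- (D ** expm_neg D \<tau>) *v y = - (D *v (expm_neg D \<tau> *v y))"
    by (simp add: matrix_vector_mult.minus_left matrix_vector_mul_assoc)
  ultimately show ?thesis
    by (simp add: algebra_simps)
qed

lemma perturbed_linear_ode_a_priori:
  fixes D :: "real^'n^'n" and S :: "real^'n \<Rightarrow> real^'n^'n" and z :: "real \<Rightarrow> real^'n"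
  assumes T: "0 \<le> T" and \<rho>: "0 < \<rho>" and M: "0 \<le> M"
    and S_bounded: "\<And>w. norm w \<le> \<rho> \<Longrightarrow> norm (S w) \<le> M"
    and z': "\<And>\<tau>. \<tau> \<in> {0..T} \<Longrightarrow> (z has_vector_derivative S (z \<tau>) *v p - D *v z \<tau>) (at \<tau>)"
    and small: "exp ((2 * norm D + 1) * T) * (norm (z 0) ^ 2 + (M * norm p) ^ 2 * T) < \<rho>\<^sup>2"
    and \<tau>: "\<tau> \<in> {0..T}"
  shows "norm (z \<tau>) < \<rho>"
    and "norm (z \<tau>) ^ 2 \<le> exp ((2 * norm D + 1) * T) * (norm (z 0) ^ 2 + (M * norm p) ^ 2 * T)"
proof -
  define c where "c = 2 * norm D + 1"
  have growth: "norm (S (z s) *v p - D *v z s) \<le> norm D * norm (z s) + M * norm p"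
    if "norm (z s) \<le> \<rho>" for s
  proof -
    have "norm (S (z s) *v p) \<le> M * norm p"
      using S_bounded[OF that] norm_matrix_vector_mult_le[of "S (z s)" p]
      by (meson mult_right_mono norm_ge_zero order_trans)
    then show ?thesis
      using norm_triangle_ineq4[of "S (z s) *v p" "D *v z s"] norm_matrix_vector_mult_le[of D "z s"]
      by linarith
  qed
  have inside: "norm (z s) < \<rho>" if "s \<in> {0..T}" for s
    using that small \<rho>
    by (intro ode_stays_in_ball[OF T norm_ge_zero mult_nonneg_nonneg[OF M norm_ge_zero] z' growth])
      (auto simp: power_mult_distrib)
  then show "norm (z \<tau>) < \<rho>" using \<tau> .
  have "norm (z \<tau>) ^ 2 \<le> exp (c * \<tau>) * (norm (z 0) ^ 2 + (M * norm p) ^ 2 * \<tau>)"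
    unfolding c_def
  proof (rule ode_energy_estimate[OF _ norm_ge_zero mult_nonneg_nonneg[OF M norm_ge_zero]])
    fix s assume "s \<in> {0..\<tau>}"
    with \<tau> have s: "s \<in> {0..T}" by auto
    show "(z has_vector_derivative S (z s) *v p - D *v z s) (at s)" by (rule z'[OF s])
    show "norm (S (z s) *v p - D *v z s) \<le> norm D * norm (z s) + M * norm p"
      using inside[OF s] by (intro growth) simp
  qed (use \<tau> in simp)
  also have "\<dots> \<le> exp (c * T) * (norm (z 0) ^ 2 + (M * norm p) ^ 2 * T)"
  proof -
    have "c * \<tau> \<le> c * T" using \<tau> by (intro mult_left_mono) (auto simp: c_def)
    then have "exp (c * \<tau>) \<le> exp (c * T)" by simp
    moreover have "(M * norm p) ^ 2 * \<tau> \<le> (M * norm p) ^ 2 * T" using \<tau> by (intro mult_left_mono) auto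
    moreover have "0 \<le> norm (z 0) ^ 2 + (M * norm p) ^ 2 * \<tau>" using \<tau> by simp
    ultimately show ?thesis by (simp add: mult_mono)
  qed
  finally show "norm (z \<tau>) ^ 2 \<le> exp ((2 * norm D + 1) * T) * (norm (z 0) ^ 2 + (M * norm p) ^ 2 * T)"
    by (simp add: c_def)
qed

lemma perturbed_linear_ode_error:
  fixes D :: "real^'n^'n" and S :: "real^'n \<Rightarrow> real^'n^'n" and z :: "real \<Rightarrow> real^'n"
  assumes T: "0 \<le> T" and \<rho>: "0 < \<rho>" and Cs: "0 \<le> Cs" and M: "0 \<le> M"
    and S_near: "\<And>w. norm w \<le> \<rho> \<Longrightarrow> norm (S w - mat 1) \<le> Cs * norm w ^ 2"
    and S_bounded: "\<And>w. norm w \<le> \<rho> \<Longrightarrow> norm (S w) \<le> M"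
    and z0: "z 0 = y"
    and z': "\<And>\<tau>. \<tau> \<in> {0..T} \<Longrightarrow> (z has_vector_derivative S (z \<tau>) *v p - D *v z \<tau>) (at \<tau>)"
    and R: "exp ((2 * norm D + 1) * T) * (norm y ^ 2 + (M * norm p) ^ 2 * T) \<le> R" "R < \<rho>\<^sup>2"
  shows "norm (z T - (expm_neg D T *v y + expm_neg_integral D T *v p))
    \<le> sqrt (exp ((2 * norm D + 1) * T) * T) * (Cs * R * norm p)"
proof -
  define e where "e \<tau> = z \<tau> - (expm_neg D \<tau> *v y + expm_neg_integral D \<tau> *v p)" for \<tau>
  have small: "exp ((2 * norm D + 1) * T) * (norm (z 0) ^ 2 + (M * norm p) ^ 2 * T) < \<rho>\<^sup>2"
    using R z0 by simp
  have inside: "norm (z \<tau>) < \<rho>" and z_le: "norm (z \<tau>) ^ 2 \<le> R" if \<tau>: "\<tau> \<in> {0..T}" for \<tau>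
    using perturbed_linear_ode_a_priori[OF T \<rho> M S_bounded z' small \<tau>] R z0 by simp_all
  have e'_le: "norm ((S (z \<tau>) - mat 1) *v p - D *v e \<tau>) \<le> norm D * norm (e \<tau>) + Cs * R * norm p"
    if \<tau>: "\<tau> \<in> {0..T}" for \<tau>
  proof -
    have "norm ((S (z \<tau>) - mat 1) *v p) \<le> (Cs * norm (z \<tau>) ^ 2) * norm p"
      using S_near[of "z \<tau>"] inside[OF \<tau>] norm_matrix_vector_mult_le[of "S (z \<tau>) - mat 1" p]
      by (meson less_imp_le mult_right_mono norm_ge_zero order_trans)
    also have "\<dots> \<le> Cs * R * norm p"
      using z_le[OF \<tau>] Cs by (intro mult_right_mono mult_left_mono) auto
    finally show ?thesis
      using norm_triangle_ineq4[of "(S (z \<tau>) - mat 1) *v p" "D *v e \<tau>"] norm_matrix_vector_mult_le[of D "e \<tau>"]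
      by linarith
  qed
  have "R \<ge> 0" using R(1) T by (smt (verit) exp_gt_zero mult_nonneg_nonneg zero_le_power2)
  then have "norm (e T) ^ 2 \<le> exp ((2 * norm D + 1) * T) * (norm (e 0) ^ 2 + (Cs * R * norm p) ^ 2 * T)"
    using Cs unfolding e_def
    by (intro ode_energy_estimate[OF T norm_ge_zero _ linear_deviation_has_vector_derivative[OF z']
        e'_le[unfolded e_def]]) auto
  also have "e 0 = 0" by (simp add: e_def z0 expm_neg_0 expm_neg_integral_0)
  finally have "norm (e T) \<le> sqrt (exp ((2 * norm D + 1) * T) * T * (Cs * R * norm p) ^ 2)"
    by (intro real_le_rsqrt) (simp add: mult_ac)
  also have "\<dots> = sqrt (exp ((2 * norm D + 1) * T) * T) * (Cs * R * norm p)"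
    using Cs \<open>R \<ge> 0\<close> by (simp add: real_sqrt_mult)
  finally show ?thesis by (simp add: e_def)
qed

lemma eventually_nhds_pair_small:
  assumes "0 < r"
  shows "\<forall>\<^sub>F (p, y) in nhds ((0::'a::real_normed_vector), (0::'b::real_normed_vector)).
    norm p < 1 \<and> Q * (norm y ^ 2 + norm p ^ 2) < r"
proof -
  have "((\<lambda>(p, y). norm p) \<longlongrightarrow> 0) (nhds ((0::'a), (0::'b)))"
    "((\<lambda>(p, y). Q * (norm y ^ 2 + norm p ^ 2)) \<longlongrightarrow> 0) (nhds ((0::'a), (0::'b)))"
    by (auto simp: case_prod_unfold intro!: tendsto_eq_intros filterlim_ident)
  from order_tendstoD(2)[OF this(1) zero_less_one] order_tendstoD(2)[OF this(2) assms] show ?thesis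
    by (simp add: case_prod_unfold eventually_conj_iff)
qed

lemma perturbed_linear_ode_quadratic_error:
  fixes D :: "real^'n^'n" and S :: "real^'n \<Rightarrow> real^'n^'n"
  assumes T: "0 \<le> T" and \<rho>: "0 < \<rho>" and Cs: "0 \<le> Cs"
    and S_near: "\<And>w. norm w \<le> \<rho> \<Longrightarrow> norm (S w - mat 1) \<le> Cs * norm w ^ 2"
  shows "\<exists>K. \<forall>\<^sub>F (p, y) in nhds (0, 0). \<forall>z. z 0 = y \<longrightarrow>
      (\<forall>\<tau>\<in>{0..T}. (z has_vector_derivative S (z \<tau>) *v p - D *v z \<tau>) (at \<tau>)) \<longrightarrow>
      norm (z T - (expm_neg D T *v y + expm_neg_integral D T *v p)) \<le> K * (norm y ^ 2 + norm p ^ 2)"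
proof -
  define M where "M = norm (mat 1 :: real^'n^'n) + Cs * \<rho>^2"
  define Q where "Q = exp ((2 * norm D + 1) * T) * (1 + M^2 * T)"
  have M: "0 \<le> M" using Cs by (simp add: M_def)
  have S_bounded: "norm (S w) \<le> M" if "norm w \<le> \<rho>" for w
    using S_near[OF that] Cs power_mono[OF that norm_ge_zero, of 2] unfolding M_def
    by (meson mult_left_mono norm_le_if_near_id order_trans add_left_mono)
  have Q: "0 \<le> Q" using T by (simp add: Q_def)
  have "\<forall>\<^sub>F (p, y) in nhds ((0::real^'n), (0::real^'n)). norm p < 1 \<and> Q * (norm y ^ 2 + norm p ^ 2) < \<rho>\<^sup>2"
    using \<rho> by (simp add: eventually_nhds_pair_small)
  moreover have "norm (z T - (expm_neg D T *v y + expm_neg_integral D T *v p))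
      \<le> (sqrt (exp ((2 * norm D + 1) * T) * T) * Cs * Q) * (norm y ^ 2 + norm p ^ 2)"
    if p: "norm p < 1" and small: "Q * (norm y ^ 2 + norm p ^ 2) < \<rho>\<^sup>2" and z0: "z 0 = y"
      and z': "\<forall>\<tau>\<in>{0..T}. (z has_vector_derivative S (z \<tau>) *v p - D *v z \<tau>) (at \<tau>)"
    for p y and z :: "real \<Rightarrow> real^'n"
  proof -
    define R where "R = Q * (norm y ^ 2 + norm p ^ 2)"
    have "norm y ^ 2 + (M * norm p) ^ 2 * T \<le> (1 + M^2 * T) * (norm y ^ 2 + norm p ^ 2)"
      using T by (simp add: power_mult_distrib algebra_simps)
    then have "exp ((2 * norm D + 1) * T) * (norm y ^ 2 + (M * norm p) ^ 2 * T) \<le> R"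
      by (simp add: R_def Q_def mult.assoc)
    then have "norm (z T - (expm_neg D T *v y + expm_neg_integral D T *v p))
        \<le> sqrt (exp ((2 * norm D + 1) * T) * T) * (Cs * R * norm p)"
      using small z0 z' unfolding R_def[symmetric]
      by (intro perturbed_linear_ode_error[OF T \<rho> Cs M S_near S_bounded]) auto
    also have "\<dots> \<le> sqrt (exp ((2 * norm D + 1) * T) * T) * (Cs * R * 1)"
    proof (rule mult_left_mono)
      have "0 \<le> Cs * R" using Cs Q by (simp add: R_def)
      with p show "Cs * R * norm p \<le> Cs * R * 1" by (intro mult_left_mono) auto
    qed (use T in simp)
    finally show ?thesis
      by (simp add: R_def mult_ac)
  qed
  ultimately show ?thesis
    by (intro exI) (auto elim!: eventually_mono)
qed

lemma perturbed_linear_ode_quadratic_error_segment: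
  fixes D :: "real^'n^'n" and S :: "real^'n \<Rightarrow> real^'n^'n"
  assumes \<rho>: "0 < \<rho>" and Cs: "0 \<le> Cs"
    and S_near: "\<And>w. norm w \<le> \<rho> \<Longrightarrow> norm (S w - mat 1) \<le> Cs * norm w ^ 2"
  shows "\<exists>K. \<forall>\<^sub>F (p, y) in nhds (0, 0). \<forall>z. z 0 = y \<longrightarrow>
      (\<forall>\<tau>\<in>closed_segment 0 T. (z has_vector_derivative S (z \<tau>) *v p - D *v z \<tau>) (at \<tau>)) \<longrightarrow>
      norm (z T - (expm_neg D T *v y + expm_neg_integral D T *v p)) \<le> K * (norm y ^ 2 + norm p ^ 2)"
proof (cases "0 \<le> T")
  case True
  then show ?thesis
    using perturbed_linear_ode_quadratic_error[OF True \<rho> Cs, of S D] S_near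
    by (simp add: closed_segment_eq_real_ivl)
next
  case False
  obtain K where "\<forall>\<^sub>F (p, y) in nhds (0, 0). \<forall>z. z 0 = y \<longrightarrow>
      (\<forall>\<tau>\<in>{0..-T}. (z has_vector_derivative S (z \<tau>) *v p - (- D) *v z \<tau>) (at \<tau>)) \<longrightarrow>
      norm (z (- T) - (expm_neg (- D) (- T) *v y + expm_neg_integral (- D) (- T) *v p))
        \<le> K * (norm y ^ 2 + norm p ^ 2)"
    using perturbed_linear_ode_quadratic_error[of "- T" \<rho> Cs S "- D"] False \<rho> Cs S_near by force
  moreover have "filterlim (\<lambda>(p, y). (- p, y)) (nhds (0, 0)) (nhds ((0::real^'n), (0::real^'n)))"
    by (auto simp: case_prod_unfold intro!: tendsto_eq_intros filterlim_ident)
  ultimately have K: "\<forall>\<^sub>F (p, y) in nhds (0, 0). \<forall>z. z 0 = y \<longrightarrow>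
      (\<forall>\<tau>\<in>{0..-T}. (z has_vector_derivative S (z \<tau>) *v (- p) - (- D) *v z \<tau>) (at \<tau>)) \<longrightarrow>
      norm (z (- T) - (expm_neg (- D) (- T) *v y + expm_neg_integral (- D) (- T) *v (- p)))
        \<le> K * (norm y ^ 2 + norm p ^ 2)"
    by (auto dest: eventually_compose_filterlim simp: case_prod_unfold)
  have "norm (z T - (expm_neg D T *v y + expm_neg_integral D T *v p)) \<le> K * (norm y ^ 2 + norm p ^ 2)"
    if "\<forall>z. z 0 = y \<longrightarrow>
      (\<forall>\<tau>\<in>{0..-T}. (z has_vector_derivative S (z \<tau>) *v (- p) - (- D) *v z \<tau>) (at \<tau>)) \<longrightarrow>
      norm (z (- T) - (expm_neg (- D) (- T) *v y + expm_neg_integral (- D) (- T) *v (- p)))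
        \<le> K * (norm y ^ 2 + norm p ^ 2)"
      and "z 0 = y"
      and z': "\<forall>\<tau>\<in>closed_segment 0 T. (z has_vector_derivative S (z \<tau>) *v p - D *v z \<tau>) (at \<tau>)"
    for p y and z :: "real \<Rightarrow> real^'n"
  proof -
    have "\<forall>\<tau>\<in>{0..-T}. ((\<lambda>\<tau>. z (- \<tau>)) has_vector_derivative S (z (- \<tau>)) *v (- p) - (- D) *v z (- \<tau>)) (at \<tau>)"
    proof
      fix \<tau> assume "\<tau> \<in> {0..-T}"
      with False z' have "(z has_vector_derivative S (z (- \<tau>)) *v p - D *v z (- \<tau>)) (at (- \<tau>))"
        by (auto simp: closed_segment_eq_real_ivl)
      from has_vector_derivative_reflect[OF this]
      show "((\<lambda>\<tau>. z (- \<tau>)) has_vector_derivative S (z (- \<tau>)) *v (- p) - (- D) *v z (- \<tau>)) (at \<tau>)"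
        by (simp add: matrix_vector_mult.minus_left matrix_vector_mult.minus_right)
    qed
    with that show ?thesis
      by (auto simp: expm_neg_uminus expm_neg_integral_uminus matrix_vector_mult.minus_left
          matrix_vector_mult.minus_right dest!: spec[of _ "\<lambda>\<tau>. z (- \<tau>)"])
  qed
  with K show ?thesis
    by (intro exI[of _ K]) (auto elim!: eventually_mono)
qed

lemma ode_family_quadratic_deviation:
  fixes D :: "real^'n^'n" and S :: "real^'n \<Rightarrow> real^'n^'n"
    and z :: "real \<Rightarrow> real^'n \<Rightarrow> real^'n \<Rightarrow> real^'n"
  assumes \<rho>: "0 < \<rho>" and Cs: "0 \<le> Cs"
    and S_near: "\<And>w. norm w \<le> \<rho> \<Longrightarrow> norm (S w - mat 1) \<le> Cs * norm w ^ 2"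
    and U: "open U" "(0, 0) \<in> U" and I: "is_interval I" "0 \<in> I" and t: "t \<in> I"
    and z': "\<And>p y s. (p, y) \<in> U \<Longrightarrow> s \<in> I \<Longrightarrow>
      ((\<lambda>t. z t p y) has_vector_derivative S (z s p y) *v p - D *v z s p y) (at s)"
    and z0: "\<And>p y. (p, y) \<in> U \<Longrightarrow> z 0 p y = y"
  shows "\<exists>K. \<forall>\<^sub>F (p, y) in nhds (0, 0).
    norm (z t p y - (expm_neg D t *v y + expm_neg_integral D t *v p)) \<le> K * (norm y ^ 2 + norm p ^ 2)"
proof -
  obtain K where K: "\<forall>\<^sub>F (p, y) in nhds (0, 0). \<forall>z. z 0 = y \<longrightarrow>
      (\<forall>\<tau>\<in>closed_segment 0 t. (z has_vector_derivative S (z \<tau>) *v p - D *v z \<tau>) (at \<tau>)) \<longrightarrow>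
      norm (z t - (expm_neg D t *v y + expm_neg_integral D t *v p)) \<le> K * (norm y ^ 2 + norm p ^ 2)"
    using perturbed_linear_ode_quadratic_error_segment[OF \<rho> Cs, of S t D] S_near by blast
  have "closed_segment 0 t \<subseteq> I"
    using I t by (simp add: closed_segment_subset is_interval_convex)
  have "\<forall>\<^sub>F (p, y) in nhds (0, 0). (p, y) \<in> U"
    using eventually_nhds_in_open[OF U] by (simp add: case_prod_unfold)
  with K have "\<forall>\<^sub>F (p, y) in nhds (0, 0).
      norm (z t p y - (expm_neg D t *v y + expm_neg_integral D t *v p)) \<le> K * (norm y ^ 2 + norm p ^ 2)"
  proof eventually_elim
    case (elim q)
    obtain p y where q: "q = (p, y)" by fastforce
    with elim have "(p, y) \<in> U" by simp
    with z' z0 \<open>closed_segment 0 t \<subseteq> I\<close> elim show ?case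
      by (auto simp: q dest!: spec[of _ "\<lambda>\<tau>. z \<tau> p y"])
  qed
  then show ?thesis by blast
qed

lemma bigo_of_quadratic_deviation:
  fixes f :: "'a::real_normed_vector \<Rightarrow> 'b::real_normed_vector \<Rightarrow> 'c::real_normed_vector"
  assumes "\<forall>\<^sub>F (p, y) in nhds (0, 0). norm (f p y) \<le> K * (norm y ^ 2 + norm p ^ 2)"
  shows "(\<lambda>(p, y). norm (f p y)) \<in> O[at (0, 0)](\<lambda>(p, y). norm y ^ 2 + norm p ^ 2 + norm p * norm y)"
proof (rule bigoI[where c = "max K 0"])
  have "K * (v ^ 2 + u ^ 2) \<le> max K 0 * (v ^ 2 + u ^ 2 + u * v)" if "0 \<le> u" "0 \<le> v" for u v :: real
    using that by (intro order_trans[OF mult_right_mono[of K "max K 0"] mult_left_mono]) auto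
  with assms show "\<forall>\<^sub>F q in at (0, 0). norm ((\<lambda>(p, y). norm (f p y)) q)
      \<le> max K 0 * norm ((\<lambda>(p, y). norm y ^ 2 + norm p ^ 2 + norm p * norm y) q)"
    by (auto simp: eventually_at_filter elim!: eventually_mono intro: order_trans)
qed

lemma has_derivative_if_quadratic_remainder:
  assumes L: "bounded_linear L"
    and f: "\<forall>\<^sub>F x in nhds a. norm (f x - f a - L (x - a)) \<le> K * norm (x - a) ^ 2"
  shows "(f has_derivative L) (at a)"
  unfolding has_derivative_at_alt
proof (intro conjI L allI impI)
  fix e :: real assume e: "0 < e"
  obtain d where d: "0 < d" "\<And>x. dist x a < d \<Longrightarrow> norm (f x - f a - L (x - a)) \<le> K * norm (x - a) ^ 2"
    using f unfolding eventually_nhds_metric by blast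
  show "\<exists>d>0. \<forall>x. norm (x - a) < d \<longrightarrow> norm (f x - f a - L (x - a)) \<le> e * norm (x - a)"
  proof (intro exI[of _ "min d (e / (\<bar>K\<bar> + 1))"] conjI allI impI)
    fix x assume x: "norm (x - a) < min d (e / (\<bar>K\<bar> + 1))"
    have "norm (f x - f a - L (x - a)) \<le> K * norm (x - a) ^ 2"
      using d(2)[of x] x by (simp add: dist_norm)
    also have "\<dots> \<le> (\<bar>K\<bar> * norm (x - a)) * norm (x - a)"
      by (simp add: power2_eq_square mult_right_mono mult.assoc[symmetric])
    also have "\<dots> \<le> e * norm (x - a)"
    proof (rule mult_right_mono)
      have "\<bar>K\<bar> * norm (x - a) \<le> (\<bar>K\<bar> + 1) * norm (x - a)" by (simp add: mult_right_mono)
      also have "\<dots> \<le> e" using x by (simp add: field_simps)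
      finally show "\<bar>K\<bar> * norm (x - a) \<le> e" .
    qed simp
    finally show "norm (f x - f a - L (x - a)) \<le> e * norm (x - a)" .
  qed (use d(1) e in simp)
qed

lemma has_derivative_of_quadratic_deviation:
  fixes g :: "real^'n \<Rightarrow> real^'n \<Rightarrow> real^'n"
  assumes "\<forall>\<^sub>F (p, y) in nhds (0, 0). norm (g p y - (A *v y + B *v p)) \<le> K * (norm y ^ 2 + norm p ^ 2)"
  shows "((\<lambda>p. g p 0) has_derivative (\<lambda>v. B *v v)) (at 0)"
proof -
  from eventually_compose_filterlim[OF assms tendsto_Pair[OF filterlim_ident tendsto_const]]
  have K: "\<forall>\<^sub>F p in nhds 0. norm (g p 0 - B *v p) \<le> K * norm p ^ 2"
    by simp
  then have "g 0 0 = 0" by (auto dest: eventually_nhds_x_imp_x)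
  with K have "\<forall>\<^sub>F p in nhds 0. norm (g p 0 - g 0 0 - B *v (p - 0)) \<le> K * norm (p - 0) ^ 2"
    by simp
  then show ?thesis
    by (rule has_derivative_if_quadratic_remainder[OF matrix_vector_mult.bounded_linear_right])
qed

theorem mainTheorem3:
  fixes E :: "'m::finite \<Rightarrow> real^'n^'n"
    and \<beta> :: "real^'m^'m"
    and \<omega> :: "real^'m"
    and yhat :: "real \<Rightarrow> real^'n \<Rightarrow> real^'n \<Rightarrow> real^'n"
    and U :: "((real^'n) \<times> (real^'n)) set"
    and I :: "real set"
  assumes E_antisym: "\<And>i a b. E i $ a $ b = - (E i $ b $ a)"
    and \<beta>_sym: "transpose \<beta> = \<beta>"
    and \<beta>_nondeg: "invertible \<beta>"
    and U_open: "open U" and U_0: "(0, 0) \<in> U"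
    and I_open: "open I" and I_int: "is_interval I" and I_0: "0 \<in> I" and I_1: "1 \<in> I"
    and yhat_ode: "\<And>p y s. (p, y) \<in> U \<Longrightarrow> s \<in> I \<Longrightarrow>
        ((\<lambda>t. yhat t p y) has_vector_derivative yhat_rhs E \<beta> \<omega> p (yhat s p y)) (at s)"
    and yhat_init: "\<And>p y. (p, y) \<in> U \<Longrightarrow> yhat 0 p y = y"
  shows "(\<forall>t\<in>I. (\<lambda>(p, y). norm (yhat t p y
              - (mat_series (expneg_coeff t) (Dom E \<beta> \<omega>) *v y
                 + mat_series (oneminusexp_div_coeff t) (Dom E \<beta> \<omega>) *v p)))
            \<in> O[at (0, 0)](\<lambda>(p, y). norm y ^ 2 + norm p ^ 2 + norm p * norm y))
      \<and> (\<exists>J :: real^'n^'n. ((\<lambda>p. yhat 1 p 0) has_derivative (\<lambda>v. J *v v)) (at 0)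
            \<and> det J = det (mat_series sinhc_half_coeff (Dom E \<beta> \<omega>)))"
proof -
  define D where "D = Dom E \<beta> \<omega>"
  define S where "S w = mat_series sqrtcot_coeff (Kmat E \<beta> w)" for w
  obtain \<rho> Cs where \<rho>: "0 < \<rho>" and Cs: "0 \<le> Cs"
    and S_near: "\<And>w. norm w \<le> \<rho> \<Longrightarrow> norm (S w - mat 1) \<le> Cs * norm w ^ 2"
    unfolding S_def using norm_sqrtcot_Kmat_diff_id_le by blast
  have deviation: "\<exists>K. \<forall>\<^sub>F (p, y) in nhds (0, 0). norm (yhat t p y
      - (expm_neg D t *v y + expm_neg_integral D t *v p)) \<le> K * (norm y ^ 2 + norm p ^ 2)"
    if "t \<in> I" for t
  proof (rule ode_family_quadratic_deviation[OF \<rho> Cs _ U_open U_0 I_int I_0 that])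
    show "norm (S w - mat 1) \<le> Cs * norm w ^ 2" if "norm w \<le> \<rho>" for w
      using S_near that .
    show "((\<lambda>t. yhat t p y) has_vector_derivative S (yhat s p y) *v p - D *v yhat s p y) (at s)"
      if "(p, y) \<in> U" "s \<in> I" for p y s
      using yhat_ode[OF that] by (simp add: yhat_rhs_def S_def D_def)
  qed (rule yhat_init)
  have "(\<lambda>(p, y). norm (yhat t p y - (expm_neg D t *v y + expm_neg_integral D t *v p)))
      \<in> O[at (0, 0)](\<lambda>(p, y). norm y ^ 2 + norm p ^ 2 + norm p * norm y)" if "t \<in> I" for t
    using deviation[OF that] by (auto intro: bigo_of_quadratic_deviation)
  moreover have "((\<lambda>p. yhat 1 p 0) has_derivative (\<lambda>v. expm_neg_integral D 1 *v v)) (at 0)"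
    using deviation[OF I_1] by (auto intro: has_derivative_of_quadratic_deviation)
  moreover have "det (expm_neg_integral D 1) = det (mat_series sinhc_half_coeff D)"
    unfolding mat_series_sinhc_half_coeff D_def
    by (rule det_expm_neg_integral[OF Dom_transpose[OF E_antisym]])
  ultimately show ?thesis
    by (auto simp: D_def mat_series_expneg_coeff mat_series_oneminusexp_div_coeff)
qed

end
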